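(* Let $L$ be isomorphic to a sublattice of a free lattice, and assume that $L\in\mathcal{N}$. Let $a,b_1,b_2,b_3,b_4,b_5\in L$ be such that $a\parallel b_i$ for all $1\le i\le 5$, $b_i<b_{i+1}$ for all $1\le i\le 4$, and $a\vee b_i<a\vee b_{i+1}$ for all $1\le i\le 4$. If $(a\vee b_4)\wedge b_5\ne b_4$, then $(a\vee b_3)\wedge b_5$ is covered by $a\vee b_3$ in $L$.
   Context: $\mathcal{N}$ denotes the variety of lattices generated by the pentagon $N_5$. For elements $u,v$, $u\parallel v$ means neither $u\le v$ nor $v\le u$. For $u<v$ in $L$, $v$ covers $u$ if there is no $w\in L$ with $u<w<v$. *)

theory Defs
  imports Main
begin

datatype 'x lterm = Var 'x | Join "'x lterm" "'x lterm" | Meet "'x lterm" "'x lterm"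

text \<open>Equality in the free lattice FL(X): the congruence on lattice terms generated by the
lattice axioms (i.e. the equational theory of lattices). FL(X) is the quotient of
'x lterm by this relation.\<close>

inductive fl_eq :: "'x lterm \<Rightarrow> 'x lterm \<Rightarrow> bool" where
  fl_refl: "fl_eq s s"
| fl_sym: "fl_eq s t \<Longrightarrow> fl_eq t s"
| fl_trans: "fl_eq s t \<Longrightarrow> fl_eq t u \<Longrightarrow> fl_eq s u"
| fl_join_cong: "fl_eq s s' \<Longrightarrow> fl_eq t t' \<Longrightarrow> fl_eq (Join s t) (Join s' t')"
| fl_meet_cong: "fl_eq s s' \<Longrightarrow> fl_eq t t' \<Longrightarrow> fl_eq (Meet s t) (Meet s' t')"
| fl_join_comm: "fl_eq (Join s t) (Join t s)"
| fl_meet_comm: "fl_eq (Meet s t) (Meet t s)"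
| fl_join_assoc: "fl_eq (Join (Join s t) u) (Join s (Join t u))"
| fl_meet_assoc: "fl_eq (Meet (Meet s t) u) (Meet s (Meet t u))"
| fl_join_idem: "fl_eq (Join s s) s"
| fl_meet_idem: "fl_eq (Meet s s) s"
| fl_absorb1: "fl_eq (Join s (Meet s t)) s"
| fl_absorb2: "fl_eq (Meet s (Join s t)) s"

definition embeds_in_free_lattice :: "('a::lattice \<Rightarrow> 'x lterm) \<Rightarrow> bool" where
  "embeds_in_free_lattice f \<longleftrightarrow>
     (\<forall>x y. fl_eq (f (sup x y)) (Join (f x) (f y))) \<and>
     (\<forall>x y. fl_eq (f (inf x y)) (Meet (f x) (f y))) \<and>
     (\<forall>x y. fl_eq (f x) (f y) \<longrightarrow> x = y)"

datatype n5 = N5_0 | N5_a | N5_b | N5_c | N5_1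

definition n5_le :: "n5 \<Rightarrow> n5 \<Rightarrow> bool" where
  "n5_le x y \<longleftrightarrow> x = N5_0 \<or> y = N5_1 \<or> x = y \<or> (x = N5_a \<and> y = N5_b)"

definition n5_join :: "n5 \<Rightarrow> n5 \<Rightarrow> n5" where
  "n5_join x y = (if n5_le x y then y else if n5_le y x then x else N5_1)"

definition n5_meet :: "n5 \<Rightarrow> n5 \<Rightarrow> n5" where
  "n5_meet x y = (if n5_le x y then x else if n5_le y x then y else N5_0)"

primrec n5_eval :: "('x \<Rightarrow> n5) \<Rightarrow> 'x lterm \<Rightarrow> n5" where
  "n5_eval v (Var x) = v x"
| "n5_eval v (Join s t) = n5_join (n5_eval v s) (n5_eval v t)"
| "n5_eval v (Meet s t) = n5_meet (n5_eval v s) (n5_eval v t)"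

primrec lt_eval :: "('x \<Rightarrow> 'a::lattice) \<Rightarrow> 'x lterm \<Rightarrow> 'a" where
  "lt_eval v (Var x) = v x"
| "lt_eval v (Join s t) = sup (lt_eval v s) (lt_eval v t)"
| "lt_eval v (Meet s t) = inf (lt_eval v s) (lt_eval v t)"

text \<open>A lattice lies in the variety \<N> generated by N5 iff it satisfies every lattice
identity (in countably many variables) that holds in N5 (Birkhoff).\<close>
definition in_var_N5 :: "'a::lattice itself \<Rightarrow> bool" where
  "in_var_N5 _ \<longleftrightarrow>
     (\<forall>s t :: nat lterm. (\<forall>v. n5_eval v s = n5_eval v t) \<longrightarrow>
        (\<forall>v :: nat \<Rightarrow> 'a. lt_eval v s = lt_eval v t))"

definition incomparable :: "'a::order \<Rightarrow> 'a \<Rightarrow> bool" where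
  "incomparable u v \<longleftrightarrow> \<not> u \<le> v \<and> \<not> v \<le> u"

definition covers :: "'a::order \<Rightarrow> 'a \<Rightarrow> bool" where
  "covers v u \<longleftrightarrow> u < v \<and> \<not> (\<exists>w. u < w \<and> w < v)"

end

theory Submission
  imports Defs
begin

text \<open>
  A sublattice of a free lattice satisfies Whitman's condition (W): \<open>x \<sqinter> y \<le> u \<squnion> v\<close>
  forces \<open>x \<le> u \<squnion> v\<close>, \<open>y \<le> u \<squnion> v\<close>, \<open>x \<sqinter> y \<le> u\<close> or \<open>x \<sqinter> y \<le> v\<close>, as Whitman's
  solution of the word problem for free lattices shows.
  Let \<open>(a \<squnion> b\<^sub>3) \<sqinter> b\<^sub>5 \<le> w \<le> a \<squnion> b\<^sub>3\<close>. Four inequalities between \<open>a, b\<^sub>2, \<dots>, b\<^sub>5, w\<close>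
  hold in \<open>N\<^sub>5\<close> for all such configurations, as a finite check shows, and hence in every
  lattice of \<open>\<N>\<close>. Applying (W) to two of them, every alternative other than
  \<open>w = (a \<squnion> b\<^sub>3) \<sqinter> b\<^sub>5\<close> and \<open>w = a \<squnion> b\<^sub>3\<close> contradicts the strict growth of the
  \<open>a \<squnion> b\<^sub>i\<close> or the incomparability of \<open>a\<close> with the \<open>b\<^sub>i\<close>.
\<close>

fun whitman_le :: "'x lterm \<Rightarrow> 'x lterm \<Rightarrow> bool" where
  "whitman_le (Var x) (Var y) \<longleftrightarrow> x = y"
| "whitman_le (Join s t) u \<longleftrightarrow> whitman_le s u \<and> whitman_le t u"
| "whitman_le (Var x) (Meet u v) \<longleftrightarrow> whitman_le (Var x) u \<and> whitman_le (Var x) v"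
| "whitman_le (Meet s t) (Meet u v) \<longleftrightarrow> whitman_le (Meet s t) u \<and> whitman_le (Meet s t) v"
| "whitman_le (Var x) (Join u v) \<longleftrightarrow> whitman_le (Var x) u \<or> whitman_le (Var x) v"
| "whitman_le (Meet s t) (Var y) \<longleftrightarrow> whitman_le s (Var y) \<or> whitman_le t (Var y)"
| "whitman_le (Meet s t) (Join u v) \<longleftrightarrow>
     whitman_le s (Join u v) \<or> whitman_le t (Join u v) \<or>
     whitman_le (Meet s t) u \<or> whitman_le (Meet s t) v"

lemma whitman_le_Meet_right [simp]:
  "whitman_le s (Meet u v) \<longleftrightarrow> whitman_le s u \<and> whitman_le s v"
  by (induction s) auto

lemma whitman_le_Join_rightI1: "whitman_le s u \<Longrightarrow> whitman_le s (Join u v)"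
  and whitman_le_Join_rightI2: "whitman_le s v \<Longrightarrow> whitman_le s (Join u v)"
  by (induction s) auto

lemma whitman_le_Meet_leftI1: "whitman_le s u \<Longrightarrow> whitman_le (Meet s t) u"
  and whitman_le_Meet_leftI2: "whitman_le t u \<Longrightarrow> whitman_le (Meet s t) u"
  by (induction u) auto

lemmas whitman_le_intros =
  whitman_le_Join_rightI1 whitman_le_Join_rightI2 whitman_le_Meet_leftI1 whitman_le_Meet_leftI2

lemma whitman_le_refl: "whitman_le s s"
  by (induction s) (auto intro: whitman_le_intros)

lemma whitman_le_trans: "whitman_le s t \<Longrightarrow> whitman_le t u \<Longrightarrow> whitman_le s u"
proof (induction s arbitrary: t u)
  case (Join s1 s2) then show ?case by auto
next
  case (Var x)
  then show ?case
  proof (induction u arbitrary: t)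
    case (Meet u1 u2) then show ?case by auto
  next
    case (Var y) then show ?case by (induction t) auto
  next
    case (Join u1 u2) then show ?case by (induction t) (fastforce intro: whitman_le_intros)+
  qed
next
  case (Meet s1 s2)
  then show ?case
  proof (induction u arbitrary: t)
    case (Meet u1 u2) then show ?case by auto
  next
    case (Var y) then show ?case by (induction t) (auto intro: whitman_le_intros)
  next
    case (Join u1 u2) then show ?case by (induction t) (fastforce intro: whitman_le_intros)+
  qed
qed

lemma fl_eq_imp_whitman_le: "fl_eq s t \<Longrightarrow> whitman_le s t \<and> whitman_le t s"
  by (induction rule: fl_eq.induct)
     (auto intro: whitman_le_intros whitman_le_refl dest: whitman_le_trans)

definition fl_le :: "'x lterm \<Rightarrow> 'x lterm \<Rightarrow> bool" where
  "fl_le s t \<longleftrightarrow> fl_eq (Meet s t) s"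

lemma fl_le_refl: "fl_le s s"
  unfolding fl_le_def by (rule fl_meet_idem)

lemma fl_le_trans: "fl_le s t \<Longrightarrow> fl_le t u \<Longrightarrow> fl_le s u"
  unfolding fl_le_def by (meson fl_trans fl_sym fl_refl fl_meet_cong fl_meet_assoc)

lemma fl_le_Meet_lower1: "fl_le (Meet s t) s"
  unfolding fl_le_def by (meson fl_trans fl_sym fl_refl fl_meet_cong fl_meet_assoc fl_meet_comm fl_meet_idem)

lemma fl_le_Meet_lower2: "fl_le (Meet s t) t"
  unfolding fl_le_def by (meson fl_trans fl_refl fl_meet_cong fl_meet_assoc fl_meet_idem)

lemma fl_le_Meet_greatest: "fl_le r s \<Longrightarrow> fl_le r t \<Longrightarrow> fl_le r (Meet s t)"
  unfolding fl_le_def by (meson fl_trans fl_sym fl_refl fl_meet_cong fl_meet_assoc)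

lemma fl_le_iff_Join: "fl_le s t \<longleftrightarrow> fl_eq (Join s t) t"
  unfolding fl_le_def
  by (meson fl_trans fl_sym fl_refl fl_meet_cong fl_join_cong fl_join_comm fl_meet_comm fl_absorb1 fl_absorb2)

lemma fl_le_Join_upper1: "fl_le s (Join s t)"
  unfolding fl_le_def by (rule fl_absorb2)

lemma fl_le_Join_upper2: "fl_le t (Join s t)"
  unfolding fl_le_def by (meson fl_trans fl_refl fl_meet_cong fl_join_comm fl_absorb2)

lemma fl_le_Join_least: "fl_le s u \<Longrightarrow> fl_le t u \<Longrightarrow> fl_le (Join s t) u"
  unfolding fl_le_iff_Join by (meson fl_trans fl_refl fl_join_cong fl_join_assoc)

lemma whitman_le_imp_fl_le: "whitman_le s t \<Longrightarrow> fl_le s t"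
  by (induction s t rule: whitman_le.induct)
     (auto intro: fl_le_refl fl_le_Meet_greatest fl_le_Join_least
        fl_le_trans[OF _ fl_le_Join_upper1] fl_le_trans[OF _ fl_le_Join_upper2]
        fl_le_trans[OF fl_le_Meet_lower1] fl_le_trans[OF fl_le_Meet_lower2])

lemma embedding_le_iff:
  fixes f :: "'a::lattice \<Rightarrow> 'x lterm"
  assumes "embeds_in_free_lattice f"
  shows "x \<le> y \<longleftrightarrow> whitman_le (f x) (f y)"
proof -
  have inf: "fl_eq (f (inf x y)) (Meet (f x) (f y))" and inj: "\<And>x y. fl_eq (f x) (f y) \<Longrightarrow> x = y"
    using assms unfolding embeds_in_free_lattice_def by blast+
  show ?thesis
  proof
    assume "x \<le> y"
    then show "whitman_le (f x) (f y)"
      using fl_eq_imp_whitman_le[OF inf] by (simp add: inf_absorb1)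
  next
    assume "whitman_le (f x) (f y)"
    then have "fl_eq (f (inf x y)) (f x)"
      using inf whitman_le_imp_fl_le fl_trans unfolding fl_le_def by blast
    then show "x \<le> y"
      using inj inf.orderI by metis
  qed
qed

theorem embedding_whitman_condition:
  fixes f :: "'a::lattice \<Rightarrow> 'x lterm" and x y u v :: 'a
  assumes emb: "embeds_in_free_lattice f" and "inf x y \<le> sup u v"
  shows "x \<le> sup u v \<or> y \<le> sup u v \<or> inf x y \<le> u \<or> inf x y \<le> v"
proof -
  have "fl_eq (f (inf x y)) (Meet (f x) (f y))" and "fl_eq (f (sup u v)) (Join (f u) (f v))"
    using emb unfolding embeds_in_free_lattice_def by blast+
  then have inf: "whitman_le (f (inf x y)) (Meet (f x) (f y))" "whitman_le (Meet (f x) (f y)) (f (inf x y))"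
    and sup: "whitman_le (f (sup u v)) (Join (f u) (f v))" "whitman_le (Join (f u) (f v)) (f (sup u v))"
    by (auto dest: fl_eq_imp_whitman_le)
  have "whitman_le (Meet (f x) (f y)) (Join (f u) (f v))"
    using assms inf sup by (metis embedding_le_iff whitman_le_trans)
  then have "whitman_le (f x) (Join (f u) (f v)) \<or> whitman_le (f y) (Join (f u) (f v)) \<or>
      whitman_le (Meet (f x) (f y)) (f u) \<or> whitman_le (Meet (f x) (f y)) (f v)"
    by simp
  then show ?thesis
    unfolding embedding_le_iff[OF emb] using inf sup by (meson whitman_le_trans)
qed

instantiation n5 :: lattice
begin

definition less_eq_n5 :: "n5 \<Rightarrow> n5 \<Rightarrow> bool" where "x \<le> y \<longleftrightarrow> n5_le x y"
definition less_n5 :: "n5 \<Rightarrow> n5 \<Rightarrow> bool" where "x < y \<longleftrightarrow> n5_le x y \<and> x \<noteq> y"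
definition sup_n5 :: "n5 \<Rightarrow> n5 \<Rightarrow> n5" where "sup_n5 = n5_join"
definition inf_n5 :: "n5 \<Rightarrow> n5 \<Rightarrow> n5" where "inf_n5 = n5_meet"

instance
  by standard (auto simp: less_eq_n5_def less_n5_def sup_n5_def inf_n5_def n5_le_def n5_join_def n5_meet_def
      split: n5.splits)

end

lemma n5_eval_eq_lt_eval: "n5_eval v t = lt_eval v t"
  by (induction t) (simp_all add: sup_n5_def inf_n5_def)

primrec subst :: "('x \<Rightarrow> 'y lterm) \<Rightarrow> 'x lterm \<Rightarrow> 'y lterm" where
  "subst g (Var i) = g i"
| "subst g (Join s t) = Join (subst g s) (subst g t)"
| "subst g (Meet s t) = Meet (subst g s) (subst g t)"

lemma lt_eval_subst: "lt_eval v (subst g t) = lt_eval (\<lambda>i. lt_eval v (g i)) t"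
  by (induction t) auto

lemma lt_eval_cong: "(\<And>i. i \<in> set_lterm t \<Longrightarrow> v i = v' i) \<Longrightarrow> lt_eval v t = lt_eval v' t"
  by (induction t) auto

text \<open>A configuration is a valuation of \<open>Var 0, \<dots>, Var 5\<close> as \<open>a, b\<^sub>2, b\<^sub>3, b\<^sub>4, b\<^sub>5, w\<close>
  with \<open>b\<^sub>2 \<le> b\<^sub>3 \<le> b\<^sub>4 \<le> b\<^sub>5\<close> and \<open>(a \<squnion> b\<^sub>3) \<sqinter> b\<^sub>5 \<le> w \<le> a \<squnion> b\<^sub>3\<close>.\<close>

definition config :: "(nat \<Rightarrow> 'a::lattice) \<Rightarrow> bool" where
  "config V \<longleftrightarrow> V 1 \<le> V 2 \<and> V 2 \<le> V 3 \<and> V 3 \<le> V 4 \<and>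
     inf (sup (V 0) (V 2)) (V 4) \<le> V 5 \<and> V 5 \<le> sup (V 0) (V 2)"

text \<open>Evaluating through \<open>config_retract\<close> turns every valuation into a configuration and
  fixes configurations. Hence an inequality valid for all configurations of \<open>N\<^sub>5\<close> becomes, after
  substitution, an identity of \<open>N\<^sub>5\<close>, and transfers to every lattice in \<open>\<N>\<close>.\<close>

definition config_retract :: "nat \<Rightarrow> nat lterm" where
  "config_retract i =
    (let x2 = Join (Var 1) (Var 2); x3 = Join x2 (Var 3); x4 = Join x3 (Var 4); hi = Join (Var 0) x2
     in [Var 0, Var 1, x2, x3, x4, Meet (Join (Meet hi x4) (Var 5)) hi] ! i)"

lemma config_config_retract: "config (\<lambda>i. lt_eval v (config_retract i))"
  by (auto simp: config_def config_retract_def Let_def intro: le_supI1 le_supI2 le_infI1)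

lemma lt_eval_config_retract: "config V \<Longrightarrow> i < 6 \<Longrightarrow> lt_eval V (config_retract i) = V i"
  by (auto simp: config_def config_retract_def Let_def less_Suc_eq numeral_eq_Suc sup_absorb2 inf_absorb1)

definition n5_elems :: "n5 list" where
  "n5_elems = [N5_0, N5_a, N5_b, N5_c, N5_1]"

definition n5_configs :: "n5 list list" where
  "n5_configs =
    [[x0, x1, x2, x3, x4, x5]. x0 \<leftarrow> n5_elems, x1 \<leftarrow> n5_elems, x2 \<leftarrow> filter ((\<le>) x1) n5_elems,
       x3 \<leftarrow> filter ((\<le>) x2) n5_elems, x4 \<leftarrow> filter ((\<le>) x3) n5_elems,
       x5 \<leftarrow> filter (\<lambda>x5. inf (sup x0 x2) x4 \<le> x5 \<and> x5 \<le> sup x0 x2) n5_elems]"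

lemma config_in_n5_configs:
  fixes V :: "nat \<Rightarrow> n5"
  assumes "config V"
  shows "[V 0, V 1, V 2, V 3, V 4, V 5] \<in> set n5_configs"
proof -
  have "x \<in> set n5_elems" for x by (cases x) (simp_all add: n5_elems_def)
  then show ?thesis
    using assms unfolding n5_configs_def config_def by (simp add: image_iff)
qed

definition n5_config_le :: "nat lterm \<Rightarrow> nat lterm \<Rightarrow> bool" where
  "n5_config_le s t \<longleftrightarrow> set_lterm s \<union> set_lterm t \<subseteq> {..<6} \<and>
     list_all (\<lambda>p. lt_eval ((!) p) s \<le> lt_eval ((!) p) t) n5_configs"

lemma n5_config_le_imp_le:
  fixes V :: "nat \<Rightarrow> 'a::lattice"
  assumes N5: "in_var_N5 TYPE('a)" and V: "config V" and st: "n5_config_le s t"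
  shows "lt_eval V s \<le> lt_eval V t"
proof -
  have vars: "set_lterm s \<subseteq> {..<6}" "set_lterm t \<subseteq> {..<6}"
    using st by (auto simp: n5_config_le_def)
  have lt_eval_retract: "lt_eval W (subst config_retract u) = lt_eval W u"
    if "config W" "set_lterm u \<subseteq> {..<6}" for W :: "nat \<Rightarrow> 'b::lattice" and u
    unfolding lt_eval_subst using that by (intro lt_eval_cong) (auto simp: lt_eval_config_retract)
  have "lt_eval v (subst config_retract (Meet s t)) = lt_eval v (subst config_retract s)"
    for v :: "nat \<Rightarrow> n5"
  proof -
    let ?w = "\<lambda>i. lt_eval v (config_retract i)"
    let ?p = "[?w 0, ?w 1, ?w 2, ?w 3, ?w 4, ?w 5]"
    have p_le: "lt_eval ((!) ?p) s \<le> lt_eval ((!) ?p) t"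
      using st config_in_n5_configs[OF config_config_retract] by (auto simp: n5_config_le_def list_all_iff)
    have "?p ! i = ?w i" if "i < 6" for i
      using that by (simp add: less_Suc_eq numeral_eq_Suc) (elim disjE; simp)
    then have "lt_eval ((!) ?p) u = lt_eval ?w u" if "set_lterm u \<subseteq> {..<6}" for u
      using that by (intro lt_eval_cong) auto
    with p_le vars show ?thesis
      by (simp add: lt_eval_subst inf_absorb1)
  qed
  then have "lt_eval V (subst config_retract (Meet s t)) = lt_eval V (subst config_retract s)"
    using N5 unfolding in_var_N5_def n5_eval_eq_lt_eval by blast
  then show ?thesis
    using V vars lt_eval_retract[of V] by (simp add: inf.absorb_iff1)
qed

notation Join (infixl "\<squnion>\<^sub>t" 65) and Meet (infixl "\<sqinter>\<^sub>t" 70)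

lemma n5_le_simps [simp]:
  "N5_0 \<le> x" "x \<le> N5_1" "N5_a \<le> N5_b"
  "\<not> N5_a \<le> N5_0" "\<not> N5_a \<le> N5_c" "\<not> N5_b \<le> N5_0" "\<not> N5_b \<le> N5_a" "\<not> N5_b \<le> N5_c"
  "\<not> N5_c \<le> N5_0" "\<not> N5_c \<le> N5_a" "\<not> N5_c \<le> N5_b"
  "\<not> N5_1 \<le> N5_0" "\<not> N5_1 \<le> N5_a" "\<not> N5_1 \<le> N5_b" "\<not> N5_1 \<le> N5_c"
  by (simp_all add: less_eq_n5_def n5_le_def)

lemma n5_sup_simps [simp]:
  "sup N5_0 x = x" "sup x N5_0 = x" "sup N5_1 x = N5_1" "sup x N5_1 = N5_1"
  "sup N5_a N5_b = N5_b" "sup N5_b N5_a = N5_b" "sup N5_a N5_c = N5_1" "sup N5_c N5_a = N5_1"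
  "sup N5_b N5_c = N5_1" "sup N5_c N5_b = N5_1"
  by (simp_all add: sup_n5_def n5_join_def n5_le_def)

lemma n5_inf_simps [simp]:
  "inf N5_0 x = N5_0" "inf x N5_0 = N5_0" "inf N5_1 x = x" "inf x N5_1 = x"
  "inf N5_a N5_b = N5_a" "inf N5_b N5_a = N5_a" "inf N5_a N5_c = N5_0" "inf N5_c N5_a = N5_0"
  "inf N5_b N5_c = N5_0" "inf N5_c N5_b = N5_0"
  by (simp_all add: inf_n5_def n5_meet_def n5_le_def)

lemmas n5_config_le_unfold = n5_config_le_def n5_configs_def[unfolded n5_elems_def, simplified]

context
  fixes a b2 b3 b4 b5 w :: "'a::lattice"
  assumes N5: "in_var_N5 TYPE('a)"
    and chain: "b2 \<le> b3" "b3 \<le> b4" "b4 \<le> b5"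
    and interval: "inf (sup a b3) b5 \<le> w" "w \<le> sup a b3"
begin

lemma le_by_n5_check:
  "n5_config_le s t \<Longrightarrow> lt_eval ((!) [a, b2, b3, b4, b5, w]) s \<le> lt_eval ((!) [a, b2, b3, b4, b5, w]) t"
  using chain interval by (intro n5_config_le_imp_le[OF N5]) (simp_all add: config_def)

lemma N_first_whitman_instance:
  "inf (sup a b2) (sup b3 (inf a w)) \<le> sup (inf a w) (inf b3 (sup a b2))"
  using le_by_n5_check[of "(Var 0 \<squnion>\<^sub>t Var 1) \<sqinter>\<^sub>t (Var 2 \<squnion>\<^sub>t Var 0 \<sqinter>\<^sub>t Var 5)"
      "Var 0 \<sqinter>\<^sub>t Var 5 \<squnion>\<^sub>t Var 2 \<sqinter>\<^sub>t (Var 0 \<squnion>\<^sub>t Var 1)"]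
  by (simp add: n5_config_le_unfold)

lemma N_inf_a_le_w: "inf a (sup (inf a w) b3) \<le> w"
  using le_by_n5_check[of "Var 0 \<sqinter>\<^sub>t (Var 0 \<sqinter>\<^sub>t Var 5 \<squnion>\<^sub>t Var 2)" "Var 5"]
  by (simp add: n5_config_le_unfold)

lemma N_inf_a_sup_b5_w_le: "inf a (sup b5 w) \<le> sup (inf a w) b5"
  using le_by_n5_check[of "Var 0 \<sqinter>\<^sub>t (Var 4 \<squnion>\<^sub>t Var 5)" "Var 0 \<sqinter>\<^sub>t Var 5 \<squnion>\<^sub>t Var 4"]
  by (simp add: n5_config_le_unfold)

lemma N_second_whitman_instance:
  "inf (sup a b4) (sup b5 w) \<le> sup (sup w (inf b5 (sup a b4))) (inf a (sup b5 w))"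
  using le_by_n5_check[of "(Var 0 \<squnion>\<^sub>t Var 3) \<sqinter>\<^sub>t (Var 4 \<squnion>\<^sub>t Var 5)"
      "Var 5 \<squnion>\<^sub>t Var 4 \<sqinter>\<^sub>t (Var 0 \<squnion>\<^sub>t Var 3) \<squnion>\<^sub>t Var 0 \<sqinter>\<^sub>t (Var 4 \<squnion>\<^sub>t Var 5)"]
  by (simp add: n5_config_le_unfold)

context
  fixes f :: "'a \<Rightarrow> 'x lterm"
  assumes emb: "embeds_in_free_lattice f"
begin

lemma w_eq_inf_if_inf_a_w_le_b3:
  assumes "inf a w \<le> b3"
    and "\<not> a \<le> b5" "sup a b3 < sup a b4" "sup a b4 < sup a b5"
  shows "w = inf (sup a b3) b5"
proof -
  have a_meet: "inf a (sup b5 w) \<le> b5"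
    using N_inf_a_sup_b5_w_le assms(1) chain by (meson order_trans le_supI sup_mono order_refl)
  then have "inf a (sup b5 w) \<le> inf b5 (sup a b4)"
    by (simp add: le_infI1)
  then have "inf (sup a b4) (sup b5 w) \<le> sup w (inf b5 (sup a b4))"
    using N_second_whitman_instance by (meson order_trans order_refl sup_mono le_sup_iff)
  then consider
      "sup a b4 \<le> sup w (inf b5 (sup a b4))"
    | "sup b5 w \<le> sup w (inf b5 (sup a b4))"
    | "inf (sup a b4) (sup b5 w) \<le> w"
    | "inf (sup a b4) (sup b5 w) \<le> inf b5 (sup a b4)"
    using embedding_whitman_condition[OF emb] by blast
  then show ?thesis
  proof cases
    case 1
    then have "a \<le> sup w (inf b5 (sup a b4))"
      by simp
    also have "\<dots> \<le> sup b5 w"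
      by (simp add: inf.coboundedI1 le_supI1)
    finally have "a \<le> inf a (sup b5 w)"
      by simp
    with a_meet assms(2) show ?thesis by (meson order_trans)
  next
    case 2
    have "w \<le> sup a b4"
      using interval(2) chain(2) by (meson order_trans sup_mono order_refl)
    with 2 have "b5 \<le> sup a b4"
      by (meson order_trans le_sup_iff inf_le2)
    then have "sup a b5 \<le> sup a b4"
      by simp
    with assms(4) show ?thesis by (simp add: less_le_not_le)
  next
    case 3
    have "b4 \<le> inf (sup a b4) (sup b5 w)"
      using chain(3) by (simp add: le_supI1)
    with 3 interval(2) have "b4 \<le> sup a b3"
      by order
    then have "sup a b4 \<le> sup a b3"
      by simp
    with assms(3) show ?thesis by (simp add: less_le_not_le)
  next
    case 4
    have "w \<le> inf (sup a b4) (sup b5 w)"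
      using interval(2) chain(2) by (meson order_trans sup_mono order_refl inf_greatest sup_ge2)
    with 4 have "w \<le> b5"
      by (meson order_trans le_inf_iff)
    with interval show ?thesis
      by (simp add: order_antisym)
  qed
qed

lemma w_eq_inf_or_eq_sup:
  assumes "\<not> a \<le> b5" "\<not> b2 \<le> a"
    and "sup a b2 < sup a b3" "sup a b3 < sup a b4" "sup a b4 < sup a b5"
  shows "w = inf (sup a b3) b5 \<or> w = sup a b3"
proof -
  consider
      "sup a b2 \<le> sup (inf a w) (inf b3 (sup a b2))"
    | "sup b3 (inf a w) \<le> sup (inf a w) (inf b3 (sup a b2))"
    | "inf (sup a b2) (sup b3 (inf a w)) \<le> inf a w"
    | "inf (sup a b2) (sup b3 (inf a w)) \<le> inf b3 (sup a b2)"
    using embedding_whitman_condition[OF emb N_first_whitman_instance] by blast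
  then show ?thesis
  proof cases
    case 1
    then have "a \<le> sup (inf a w) (inf b3 (sup a b2))"
      by simp
    also have "\<dots> \<le> sup (inf a w) b3"
      by (simp add: le_supI2)
    finally have "a \<le> inf a (sup (inf a w) b3)"
      by simp
    then have "a \<le> w"
      using N_inf_a_le_w by order
    have "b3 \<le> inf (sup a b3) b5"
      using chain(2,3) by simp
    with interval(1) have "b3 \<le> w"
      by order
    with \<open>a \<le> w\<close> interval(2) show ?thesis
      by (simp add: order_antisym)
  next
    case 2
    then have "b3 \<le> sup (inf a w) (inf b3 (sup a b2))"
      by simp
    also have "\<dots> \<le> sup a b2"
      by (simp add: le_supI1)
    finally have "sup a b3 \<le> sup a b2"
      by simp
    with assms(3) show ?thesis by (simp add: less_le_not_le)
  next
    case 3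
    have "b2 \<le> inf (sup a b2) (sup b3 (inf a w))"
      using chain(1) by (simp add: le_supI1)
    with 3 have "b2 \<le> a"
      using inf_le1[of a w] by order
    with assms(2) show ?thesis ..
  next
    case 4
    have "inf a w \<le> inf (sup a b2) (sup b3 (inf a w))"
      by (simp add: le_supI1 inf.coboundedI1)
    with 4 have "inf a w \<le> b3"
      using inf_le1[of b3 "sup a b2"] by order
    with assms(1,4,5) show ?thesis
      using w_eq_inf_if_inf_a_w_le_b3 by blast
  qed
qed

end

end

theorem theorem5p4:
  fixes f :: "'a::lattice \<Rightarrow> 'x lterm"
    and a b1 b2 b3 b4 b5 :: "'a"
  assumes "embeds_in_free_lattice f"
    and "in_var_N5 TYPE('a)"
    and "incomparable a b1" "incomparable a b2" "incomparable a b3"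
        "incomparable a b4" "incomparable a b5"
    and "b1 < b2" "b2 < b3" "b3 < b4" "b4 < b5"
    and "sup a b1 < sup a b2" "sup a b2 < sup a b3"
        "sup a b3 < sup a b4" "sup a b4 < sup a b5"
    and "inf (sup a b4) b5 \<noteq> b4"
  shows "covers (sup a b3) (inf (sup a b3) b5)"
proof -
  \<comment> \<open>Only \<open>b\<^sub>2, \<dots>, b\<^sub>5\<close> enter the argument.\<close>
  have "\<not> a \<le> b5" "\<not> b2 \<le> a"
    using assms(4,7) by (auto simp: incomparable_def)
  have "inf (sup a b3) b5 < sup a b3"
    using \<open>\<not> a \<le> b5\<close> by (metis inf_le1 inf_le2 le_supE less_le)
  moreover have "w = inf (sup a b3) b5 \<or> w = sup a b3"
    if "inf (sup a b3) b5 < w" "w < sup a b3" for w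
    using w_eq_inf_or_eq_sup[OF assms(2) _ _ _ _ _ assms(1) \<open>\<not> a \<le> b5\<close> \<open>\<not> b2 \<le> a\<close> assms(13-15)]
      assms(9-11) that by auto
  ultimately show ?thesis
    unfolding covers_def by auto
qed

end
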